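(* Let $x_n=2^{-n}$ for $n\in\mathbb N$, and let $(y_n)$ be a sequence of real numbers such that $\sum_n y_n$ is absolutely convergent and $y_n\neq\sum_{i>n}y_i$ for every $n\in\mathbb N$. Then every point of the achievement set $E(x_n,y_n)\subset\mathbb R^2$ has a unique representation, and $E(x_n,y_n)$ is a Cantor set.
   Context: For an absolutely convergent series $\sum_n v_n$ in $\mathbb R^d$, its achievement set is $E(v)=\{\sum_{n=1}^\infty \varepsilon_n v_n : (\varepsilon_n)\in\{0,1\}^{\mathbb N}\}$; $E(x_n,y_n)$ denotes the achievement set of $((x_n,y_n))_n$ in $\mathbb R^2$. A point $a$ has a unique representation if there is exactly one set $A\subset\mathbb N$ with $a=\sum_{i\in A}(x_i,y_i)$. A Cantor set is a nonempty, totally disconnected, perfect, compact subset of $\mathbb R^n$. *)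

theory Defs
  imports "HOL-Analysis.Analysis"
begin

text \<open>Sequences are indexed from 0 here; index n corresponds to the paper's index n+1.\<close>

definition subsum :: "(nat \<Rightarrow> 'a::real_normed_vector) \<Rightarrow> nat set \<Rightarrow> 'a" where
  "subsum v A = (\<Sum>n. (if n \<in> A then v n else 0))"

definition achievement_set :: "(nat \<Rightarrow> 'a::real_normed_vector) \<Rightarrow> 'a set" where
  "achievement_set v = {subsum v A | A. True}"

definition unique_representation :: "(nat \<Rightarrow> 'a::real_normed_vector) \<Rightarrow> 'a \<Rightarrow> bool" where
  "unique_representation v a \<longleftrightarrow> (\<exists>!A. a = subsum v A)"

definition totally_disconnected :: "'a::topological_space set \<Rightarrow> bool" where
  "totally_disconnected S \<longleftrightarrow> (\<forall>C. C \<subseteq> S \<and> connected C \<longrightarrow> (\<exists>x. C \<subseteq> {x}))"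

definition perfect_set :: "'a::topological_space set \<Rightarrow> bool" where
  "perfect_set S \<longleftrightarrow> closed S \<and> (\<forall>x\<in>S. x islimpt S)"

definition cantor_set :: "'a::topological_space set \<Rightarrow> bool" where
  "cantor_set S \<longleftrightarrow> S \<noteq> {} \<and> totally_disconnected S \<and> perfect_set S \<and> compact S"

end

theory Submission
  imports Defs
begin

text \<open>
  Subsets of \<open>\<nat>\<close> correspond to 0-1 digit sequences \<open>e\<close>, and the achievement set is the image
  of the compact, totally disconnected set \<open>{0,1}\<^sup>\<nat>\<close> under the continuous map
  \<open>e \<mapsto> \<Sum> e\<^sub>n v\<^sub>n\<close>. If this map is injective it is a homeomorphism onto its image, which is
  therefore compact and totally disconnected, and it is perfect because flipping the \<open>k\<close>-th digit
  moves a point by \<open>\<plusminus>v\<^sub>k \<longrightarrow> 0\<close>.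

  Injectivity for \<open>v\<^sub>n = (2\<^sup>-\<^sup>n\<^sup>-\<^sup>1, y\<^sub>n)\<close>: two digit sequences with the same sum differ by a sequence
  \<open>d\<close> with values in \<open>{-1,0,1}\<close> and \<open>\<Sum> d\<^sub>n v\<^sub>n = 0\<close>. If \<open>d\<close> has a first nonzero entry
  \<open>d\<^sub>n = 1\<close>, then, because \<open>2\<^sup>-\<^sup>n\<^sup>-\<^sup>1\<close> equals the sum of all later weights, the first coordinate forces
  \<open>d\<^sub>i = -1\<close> for all \<open>i > n\<close>, and then the second coordinate reads
  \<open>y\<^sub>n = \<Sum>\<^sub>i\<^sub>>\<^sub>n y\<^sub>i\<close>, which is excluded.
\<close>

definition binary_digits :: "(nat \<Rightarrow> real) set" where
  "binary_digits = PiE UNIV (\<lambda>_. {0, 1})"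

lemma mem_binary_digits: "e \<in> binary_digits \<longleftrightarrow> (\<forall>n. e n \<in> {0, 1})"
  by (simp add: binary_digits_def PiE_iff)

lemma binary_digitD: "e \<in> binary_digits \<Longrightarrow> e n = 0 \<or> e n = 1"
  by (simp add: mem_binary_digits)

lemma compact_binary_digits: "compact binary_digits"
proof -
  have "compactin (product_topology (\<lambda>_. euclidean) UNIV) (PiE UNIV (\<lambda>_::nat. {0, 1::real}))"
    by (subst compactin_PiE) auto
  then show ?thesis
    unfolding binary_digits_def euclidean_product_topology by simp
qed

lemma totally_disconnected_binary_digits: "totally_disconnected binary_digits"
  unfolding totally_disconnected_def
proof (intro allI impI)
  fix C assume C: "C \<subseteq> binary_digits \<and> connected C"
  have same: "e = e'" if "e \<in> C" "e' \<in> C" for e e'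
  proof
    fix i
    have "(\<lambda>z. z i) ` C \<subseteq> {0, 1}"
    proof (rule image_subsetI)
      fix z assume "z \<in> C"
      with C have "z \<in> binary_digits"
        by blast
      then show "z i \<in> {0, 1}"
        by (simp add: mem_binary_digits)
    qed
    then have "finite ((\<lambda>z. z i) ` C)"
      by (rule finite_subset) simp
    moreover have "connected ((\<lambda>z. z i) ` C)"
      using C by (intro connected_continuous_image continuous_on_subset[OF continuous_on_product_coordinates]) auto
    ultimately obtain a where "(\<lambda>z. z i) ` C \<subseteq> {a}"
      using connected_finite_iff_sing by (metis empty_subsetI subset_refl)
    then have "e i = a" and "e' i = a"
      using that by auto
    then show "e i = e' i"
      by simp
  qed
  show "\<exists>x. C \<subseteq> {x}"
  proof (cases "C = {}")
    case False
    then obtain c where "c \<in> C"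
      by blast
    have "C \<subseteq> {c}"
    proof
      fix x assume "x \<in> C"
      then show "x \<in> {c}"
        using same \<open>c \<in> C\<close> by simp
    qed
    then show ?thesis
      by blast
  qed simp
qed

lemma totally_disconnected_continuous_injective_image:
  fixes f :: "'a::topological_space \<Rightarrow> 'b::t2_space"
  assumes "compact K" "continuous_on K f" "inj_on f K" "totally_disconnected K"
  shows "totally_disconnected (f ` K)"
  unfolding totally_disconnected_def
proof (intro allI impI)
  fix C assume C: "C \<subseteq> f ` K \<and> connected C"
  define g where "g = inv_into K f"
  have "continuous_on (f ` K) g"
    unfolding g_def using assms(1-3) by (intro continuous_on_inv) auto
  then have "connected (g ` C)"
    using C by (intro connected_continuous_image) (auto intro: continuous_on_subset)
  moreover have "g ` C \<subseteq> K"
    using C unfolding g_def by (auto intro: inv_into_into)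
  ultimately obtain x where "g ` C \<subseteq> {x}"
    using assms(4) unfolding totally_disconnected_def by blast
  moreover have "f ` g ` C = C"
    using C unfolding g_def by (intro image_inv_into_cancel) auto
  ultimately have "C \<subseteq> {f x}"
    by (metis image_empty image_insert image_mono)
  then show "\<exists>x. C \<subseteq> {x}" ..
qed

definition digit_sum :: "(nat \<Rightarrow> 'a::real_normed_vector) \<Rightarrow> (nat \<Rightarrow> real) \<Rightarrow> 'a" where
  "digit_sum v e = (\<Sum>n. e n *\<^sub>R v n)"

lemma subsum_eq_digit_sum: "subsum v A = digit_sum v (indicator A)"
  unfolding subsum_def digit_sum_def by (intro suminf_cong) (simp add: indicator_def)

lemma indicator_in_binary_digits: "indicator A \<in> binary_digits"
  by (simp add: mem_binary_digits indicator_def)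

lemma range_indicator_eq_binary_digits: "range indicator = binary_digits"
proof
  show "binary_digits \<subseteq> range indicator"
  proof
    fix e assume e: "e \<in> binary_digits"
    have "e = indicator {n. e n = 1}"
    proof
      fix n
      show "e n = indicator {n. e n = 1} n"
        using binary_digitD[OF e, of n] by auto
    qed
    then show "e \<in> range indicator"
      by (rule range_eqI)
  qed
qed (use indicator_in_binary_digits in blast)

lemma achievement_set_eq_digit_sum_image: "achievement_set v = digit_sum v ` binary_digits"
proof -
  have "achievement_set v = range (\<lambda>A. digit_sum v (indicator A))"
    by (auto simp: achievement_set_def subsum_eq_digit_sum)
  then show ?thesis
    by (simp add: image_image flip: range_indicator_eq_binary_digits)
qed

lemma norm_binary_digit_scaleR_le:
  assumes "e \<in> binary_digits"
  shows "norm (e n *\<^sub>R x) \<le> norm x"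
  using binary_digitD[OF assms, of n] by auto

lemma summable_digit_sum_terms:
  fixes v :: "nat \<Rightarrow> 'a::banach"
  assumes "summable (\<lambda>n. norm (v n))" and "e \<in> binary_digits"
  shows "summable (\<lambda>n. e n *\<^sub>R v n)"
  by (rule summable_norm_cancel, rule summable_comparison_test[OF _ assms(1)])
     (use norm_binary_digit_scaleR_le[OF assms(2)] in auto)

lemma continuous_on_digit_sum:
  fixes v :: "nat \<Rightarrow> 'a::banach"
  assumes "summable (\<lambda>n. norm (v n))"
  shows "continuous_on binary_digits (digit_sum v)"
proof -
  have "uniform_limit binary_digits (\<lambda>n e. \<Sum>i<n. e i *\<^sub>R v i) (digit_sum v) sequentially"
    unfolding digit_sum_def
    by (rule Weierstrass_m_test[OF _ assms]) (rule norm_binary_digit_scaleR_le)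
  then show ?thesis
    by (rule uniform_limit_theorem[rotated])
       (auto intro!: always_eventually continuous_intros continuous_on_subset[OF continuous_on_product_coordinates])
qed

lemma digit_sum_flip:
  fixes v :: "nat \<Rightarrow> 'a::banach"
  assumes "summable (\<lambda>n. norm (v n))" and "e \<in> binary_digits"
  shows "digit_sum v (e(k := 1 - e k)) = digit_sum v e + (1 - 2 * e k) *\<^sub>R v k"
proof -
  have "(\<lambda>n. e n *\<^sub>R v n + (if n = k then (1 - 2 * e k) *\<^sub>R v k else 0))
          sums (digit_sum v e + (1 - 2 * e k) *\<^sub>R v k)"
    unfolding digit_sum_def
    by (intro sums_add summable_sums summable_digit_sum_terms assms sums_single)
  moreover have "(\<lambda>n. e n *\<^sub>R v n + (if n = k then (1 - 2 * e k) *\<^sub>R v k else 0))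
                 = (\<lambda>n. (e(k := 1 - e k)) n *\<^sub>R v n)"
    by (simp add: fun_eq_iff flip: scaleR_add_left)
  ultimately show ?thesis
    unfolding digit_sum_def by (simp add: sums_iff)
qed

lemma islimpt_digit_sum_image:
  fixes v :: "nat \<Rightarrow> 'a::banach"
  assumes "summable (\<lambda>n. norm (v n))" and "inj_on (digit_sum v) binary_digits"
    and "e \<in> binary_digits"
  shows "digit_sum v e islimpt digit_sum v ` binary_digits"
proof -
  define f where "f k = e(k := 1 - e k)" for k
  have f_digits: "f k \<in> binary_digits" for k
    using \<open>e \<in> binary_digits\<close> unfolding f_def by (auto simp: mem_binary_digits)
  have "f k \<noteq> e" for k
    using binary_digitD[OF \<open>e \<in> binary_digits\<close>, of k] by (auto simp: f_def fun_eq_iff)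
  then have flips_in: "digit_sum v (f k) \<in> digit_sum v ` binary_digits - {digit_sum v e}" for k
    using f_digits inj_onD[OF assms(2) _ f_digits \<open>e \<in> binary_digits\<close>] by blast
  moreover have "(\<lambda>k. (1 - 2 * e k) *\<^sub>R v k) \<longlonglongrightarrow> 0"
  proof (rule Lim_null_comparison[OF always_eventually summable_LIMSEQ_zero[OF assms(1)]], intro allI)
    fix k
    have "\<bar>1 - 2 * e k\<bar> \<le> 1"
      using binary_digitD[OF \<open>e \<in> binary_digits\<close>, of k] by auto
    then show "norm ((1 - 2 * e k) *\<^sub>R v k) \<le> norm (v k)"
      by (simp add: mult_left_le_one_le)
  qed
  then have "(\<lambda>k. digit_sum v e + (1 - 2 * e k) *\<^sub>R v k) \<longlonglongrightarrow> digit_sum v e + 0"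
    by (intro tendsto_add tendsto_const)
  then have "(\<lambda>k. digit_sum v (f k)) \<longlonglongrightarrow> digit_sum v e"
    by (simp add: f_def digit_sum_flip[OF assms(1,3)])
  with flips_in show ?thesis
    unfolding islimpt_sequential by (intro exI[of _ "\<lambda>k. digit_sum v (f k)"] conjI allI)
qed

lemma unique_representation_if_inj_on_digit_sum:
  assumes "inj_on (digit_sum v) binary_digits" and "a \<in> achievement_set v"
  shows "unique_representation v a"
proof -
  obtain A where A: "a = subsum v A"
    using assms(2) unfolding achievement_set_def by auto
  have "B = A" if "a = subsum v B" for B
  proof -
    have "digit_sum v (indicator B) = digit_sum v (indicator A)"
      using A that by (simp add: subsum_eq_digit_sum)
    then have "indicator B = (indicator A :: nat \<Rightarrow> real)"
      by (rule inj_onD[OF assms(1)]) (rule indicator_in_binary_digits)+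
    show "B = A"
    proof (rule set_eqI)
      fix n
      show "n \<in> B \<longleftrightarrow> n \<in> A"
        using fun_cong[OF \<open>indicator B = indicator A\<close>, of n] by (simp add: indicator_def of_bool_eq_iff)
    qed
  qed
  with A show ?thesis
    unfolding unique_representation_def by (rule ex1I)
qed

lemma cantor_set_achievement_set_if_inj_on_digit_sum:
  fixes v :: "nat \<Rightarrow> 'a::banach"
  assumes "summable (\<lambda>n. norm (v n))" and "inj_on (digit_sum v) binary_digits"
  shows "cantor_set (achievement_set v)"
proof -
  have cont: "continuous_on binary_digits (digit_sum v)"
    by (rule continuous_on_digit_sum[OF assms(1)])
  then have "compact (digit_sum v ` binary_digits)"
    using compact_binary_digits by (rule compact_continuous_image)
  moreover have "totally_disconnected (digit_sum v ` binary_digits)"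
    using compact_binary_digits cont assms(2) totally_disconnected_binary_digits
    by (rule totally_disconnected_continuous_injective_image)
  moreover have "digit_sum v ` binary_digits \<noteq> {}"
    using indicator_in_binary_digits by blast
  moreover have "\<forall>x \<in> digit_sum v ` binary_digits. x islimpt digit_sum v ` binary_digits"
    using islimpt_digit_sum_image[OF assms] by blast
  ultimately show ?thesis
    unfolding cantor_set_def perfect_set_def achievement_set_eq_digit_sum_image
    by (simp add: compact_imp_closed)
qed

lemma sums_split_after_zeros:
  fixes f :: "nat \<Rightarrow> 'a::real_normed_vector"
  assumes "f sums s" and "\<And>i. i < n \<Longrightarrow> f i = 0"
  shows "s = f n + (\<Sum>i. f (i + Suc n))"
proof -
  have "(\<Sum>i<Suc n. f i) = f n"
    using assms(2) by simp
  then show ?thesis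
    using suminf_split_initial_segment[of f "Suc n"] assms(1) by (simp add: sums_iff)
qed

lemma tail_digits_forced:
  fixes d w :: "nat \<Rightarrow> real"
  assumes "summable w" and w_pos: "\<And>i. 0 < w i"
    and w_tail: "w n = (\<Sum>i. w (i + Suc n))"
    and d_ge: "\<And>i. -1 \<le> d i" and d_low: "\<And>i. i < n \<Longrightarrow> d i = 0" and d_n: "d n = 1"
    and d_sums: "(\<lambda>i. d i * w i) sums 0"
  shows "d (i + Suc n) = -1"
proof -
  define t where "t i = w (i + Suc n)" for i
  have summable_t: "summable t"
    using summable_ignore_initial_segment[OF \<open>summable w\<close>] unfolding t_def .
  have summable_dt: "summable (\<lambda>i. d (i + Suc n) * t i)"
    using summable_ignore_initial_segment[OF sums_summable[OF d_sums]] unfolding t_def .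
  have "0 = d n * w n + (\<Sum>i. d (i + Suc n) * t i)"
    unfolding t_def by (rule sums_split_after_zeros[OF d_sums]) (simp add: d_low)
  also have "\<dots> = (\<Sum>i. d (i + Suc n) * t i) + (\<Sum>i. t i)"
    using w_tail d_n unfolding t_def by simp
  also have "\<dots> = (\<Sum>i. (d (i + Suc n) + 1) * t i)"
    using suminf_add[OF summable_dt summable_t] by (simp add: distrib_right)
  finally have "(\<Sum>i. (d (i + Suc n) + 1) * t i) = 0" ..
  moreover have "summable (\<lambda>i. (d (i + Suc n) + 1) * t i)"
    using summable_add[OF summable_dt summable_t] by (simp add: distrib_right)
  moreover have "0 \<le> (d (i + Suc n) + 1) * t i" for i
    using d_ge[of "i + Suc n"] w_pos[of "i + Suc n"] unfolding t_def
    by (intro mult_nonneg_nonneg) auto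
  ultimately have "(d (i + Suc n) + 1) * t i = 0"
    using suminf_eq_zero_iff by blast
  then show ?thesis
    using w_pos[of "i + Suc n"] unfolding t_def by (simp add: add_eq_0_iff)
qed

lemma half_power_eq_tail_sum: "(1/2::real) ^ Suc n = (\<Sum>i. (1/2) ^ Suc (i + Suc n))"
proof -
  have "(\<Sum>i. (1/2::real) ^ Suc (i + Suc n)) = (\<Sum>i. (1/2) ^ Suc (Suc n) * (1/2) ^ i)"
    by (simp add: power_add mult_ac)
  also have "\<dots> = (1/2) ^ Suc (Suc n) * (\<Sum>i. (1/2) ^ i)"
    by (rule suminf_mult) (simp add: summable_geometric)
  also have "\<dots> = (1/2) ^ Suc n"
    by (simp add: suminf_geometric)
  finally show ?thesis ..
qed

lemma signed_digits_eq_zero: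
  fixes d y :: "nat \<Rightarrow> real"
  assumes "summable y"
    and y_tail: "\<And>n. y n \<noteq> (\<Sum>i. y (i + Suc n))"
    and d_vals: "\<And>i. d i \<in> {-1, 0, 1}"
    and sums_x: "(\<lambda>i. d i * (1/2) ^ Suc i) sums 0"
    and sums_y: "(\<lambda>i. d i * y i) sums 0"
  shows "d = (\<lambda>_. 0)"
proof (rule ccontr)
  assume "d \<noteq> (\<lambda>_. 0)"
  then obtain k where "d k \<noteq> 0" by auto
  define n where "n = (LEAST n. d n \<noteq> 0)"
  have "d n \<noteq> 0"
    unfolding n_def by (rule LeastI) fact
  have d_low: "d i = 0" if "i < n" for i
    using that not_less_Least unfolding n_def by blast
  define s where "s = d n"
  define d' where "d' i = s * d i" for i
  have s_sq: "s * s = 1"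
    using \<open>d n \<noteq> 0\<close> d_vals[of n] unfolding s_def by auto
  have d'_n: "d' n = 1"
    using s_sq unfolding d'_def s_def .
  have d'_low: "d' i = 0" if "i < n" for i
    using d_low[OF that] unfolding d'_def by simp
  have d'_ge: "-1 \<le> d' i" for i
    using d_vals[of i] d_vals[of n] unfolding d'_def s_def by auto
  have d'_tail: "d' (i + Suc n) = -1" for i
  proof (rule tail_digits_forced[where w = "\<lambda>i. (1/2) ^ Suc i"])
    show "(\<lambda>i. d' i * (1/2) ^ Suc i) sums 0"
      using sums_mult[OF sums_x, of s] by (simp add: d'_def mult.assoc)
    show "(1/2::real) ^ Suc n = (\<Sum>i. (1/2) ^ Suc (i + Suc n))"
      by (rule half_power_eq_tail_sum)
  qed (use d'_ge d'_low d'_n in \<open>simp_all add: summable_geometric\<close>)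
  have "(\<lambda>i. d' i * y i) sums 0"
    using sums_mult[OF sums_y, of s] by (simp add: d'_def mult.assoc)
  then have "0 = d' n * y n + (\<Sum>i. d' (i + Suc n) * y (i + Suc n))"
    by (rule sums_split_after_zeros) (simp add: d'_low)
  also have "\<dots> = y n + (\<Sum>i. - y (i + Suc n))"
    unfolding d'_n d'_tail by simp
  also have "\<dots> = y n - (\<Sum>i. y (i + Suc n))"
    using suminf_minus[OF summable_ignore_initial_segment[OF assms(1)], of "Suc n"] by simp
  finally show False
    using y_tail[of n] by simp
qed

lemma summable_norm_dyadic_pair:
  fixes y :: "nat \<Rightarrow> real"
  assumes "summable (\<lambda>n. \<bar>y n\<bar>)"
  shows "summable (\<lambda>n. norm ((1/2::real) ^ Suc n, y n))"
proof -
  have "summable (\<lambda>n. (1/2::real) ^ Suc n + \<bar>y n\<bar>)"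
    using assms by (intro summable_add) (simp_all add: summable_geometric)
  then show ?thesis
    by (rule summable_comparison_test[rotated]) (auto intro!: exI[of _ 0] order.trans[OF norm_Pair_le])
qed

lemma inj_on_digit_sum_dyadic:
  fixes y :: "nat \<Rightarrow> real"
  assumes "summable (\<lambda>n. \<bar>y n\<bar>)"
    and "\<And>n. y n \<noteq> (\<Sum>i. y (i + Suc n))"
  shows "inj_on (digit_sum (\<lambda>n. ((1/2::real) ^ Suc n, y n))) binary_digits"
proof (rule inj_onI)
  let ?v = "\<lambda>n. ((1/2::real) ^ Suc n, y n)"
  fix e e' assume e: "e \<in> binary_digits" and e': "e' \<in> binary_digits"
    and eq: "digit_sum ?v e = digit_sum ?v e'"
  define d where "d n = e n - e' n" for n
  have "(\<lambda>n. e n *\<^sub>R ?v n - e' n *\<^sub>R ?v n) sums (digit_sum ?v e - digit_sum ?v e')"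
    unfolding digit_sum_def
    by (intro sums_diff summable_sums summable_digit_sum_terms summable_norm_dyadic_pair assms(1) e e')
  then have d_sums: "(\<lambda>n. d n *\<^sub>R ?v n) sums 0"
    by (simp only: d_def scaleR_diff_left eq diff_self)
  have "(\<lambda>n. d n * (1/2) ^ Suc n) sums 0"
    using bounded_linear.sums[OF bounded_linear_fst d_sums] by simp
  moreover have "(\<lambda>n. d n * y n) sums 0"
    using bounded_linear.sums[OF bounded_linear_snd d_sums] by simp
  moreover have "d n \<in> {-1, 0, 1}" for n
    using binary_digitD[OF e, of n] binary_digitD[OF e', of n] by (auto simp: d_def)
  ultimately have "d = (\<lambda>_. 0)"
    using signed_digits_eq_zero[OF summable_rabs_cancel[OF assms(1)] assms(2)] by blast
  then show "e = e'"
    by (auto simp: d_def fun_eq_iff)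
qed

theorem mainTheorem4:
  fixes y :: "nat \<Rightarrow> real"
  assumes "summable (\<lambda>n. \<bar>y n\<bar>)"
    and "\<And>n. y n \<noteq> (\<Sum>i. y (i + Suc n))"
  shows "(\<forall>a \<in> achievement_set (\<lambda>n. ((1/2::real) ^ Suc n, y n)).
            unique_representation (\<lambda>n. ((1/2::real) ^ Suc n, y n)) a)
       \<and> cantor_set (achievement_set (\<lambda>n. ((1/2::real) ^ Suc n, y n)))"
proof -
  have summable_v: "summable (\<lambda>n. norm ((1/2::real) ^ Suc n, y n))"
    by (rule summable_norm_dyadic_pair[OF assms(1)])
  have inj: "inj_on (digit_sum (\<lambda>n. ((1/2::real) ^ Suc n, y n))) binary_digits"
    by (rule inj_on_digit_sum_dyadic[OF assms])
  show ?thesis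
    using unique_representation_if_inj_on_digit_sum[OF inj]
      cantor_set_achievement_set_if_inj_on_digit_sum[OF summable_v inj] by blast
qed

end
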